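(* The Linear aTAM is not intrinsically universal: there is no finite 1D tile set $U$ (and temperature $\tau'$) with computable $\mathcal{R},S$ such that every Linear aTAM system $\mathcal{T}$ is simulated, at some scale $m$ under $\mathcal{R}(\mathcal{T})$, by the Linear aTAM system $(U,S(\mathcal{T}),\tau')$.
   Context: 1D aTAM: a tile type has a west glue and an east glue, each a pair (finite string label, nonnegative integer strength); a tile set is finite. Assemblies are partial functions $\alpha:\mathbb{Z}\dashrightarrow T$ with nonempty interval domain; adjacent tiles interact if the east glue of the left equals the west glue of the right with positive strength; $\alpha$ is $\tau$-stable if every cut between consecutive tiles has strength $\ge\tau$. A system $\mathcal{T}=(T,\sigma,\tau)$ has finite $\tau$-stable seed $\sigma$; growth is by single $\tau$-stable tile additions (finite or infinite sequences, result = limit). The Linear aTAM additionally requires that a tile can be added at empty location $p$ only if there is a path in $\mathbb{Z}$ from $p$ to a point outside the minimal bounding interval of the current assembly avoiding its domain. $\mathcal{A}[\mathcal{T}]$ are producible assemblies, $\mathcal{A}_\Box[\mathcal{T}]$ the producible ones admitting no further tile. Simulation: an $m$-block over $S$ is a partial function $\{0,\dots,m-1\}\dashrightarrow S$; $\alpha^m_x$ is $i\mapsto\alpha(mx+i)$. A partial $R$ from $m$-blocks to $T$ is valid if $\alpha\sqsubseteq\beta$, $\alpha\in\mathrm{dom}R$ imply $R(\beta)=R(\alpha)$; $R^*(\alpha')$ is $x\mapsto R(\alpha'^m_x)$. $\alpha'$ maps cleanly if each nonempty block at $x$ has $x$ or $x\pm1$ in $\mathrm{dom}\,R^*(\alpha')$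 (or at most one nonempty block). $\mathcal{S}$ simulates $\mathcal{T}$ under $R$ if: (i) $R^*$ maps $\mathcal{A}[\mathcal{S}]$ onto $\mathcal{A}[\mathcal{T}]$ and $\mathcal{A}_\Box[\mathcal{S}]$ onto $\mathcal{A}_\Box[\mathcal{T}]$, all producible assemblies mapping cleanly; (ii) producible $\alpha'\to^\mathcal{S}\beta'$ implies $R^*(\alpha')\to^\mathcal{T}R^*(\beta')$; (iii) for every $\alpha\in\mathcal{A}[\mathcal{T}]$ there is $\Pi\subset\mathcal{A}[\mathcal{S}]$ with $R^*=\alpha$ on $\Pi$ such that for every producible $\beta$ with $\alpha\to^\mathcal{T}\beta$: each $\alpha'\in\Pi$ produces some $\beta'$ with $R^*(\beta')=\beta$, and whenever producible $\alpha''\to^\mathcal{S}\beta'$ with $R^*(\alpha'')=\alpha$, $R^*(\beta')=\beta$, some $\alpha'\in\Pi$ produces $\alpha''$. *)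

theory Defs
  imports Main "HOL-Library.Nat_Bijection"
begin

(* a glue is a pair (label, strength); a tile type is a pair (west glue, east glue) *)
type_synonym glue = "string \<times> nat"
type_synonym tile = "glue \<times> glue"
type_synonym assembly = "int \<Rightarrow> tile option"
type_synonym system = "tile set \<times> assembly \<times> nat"

definition west :: "tile \<Rightarrow> glue" where "west t = fst t"
definition east :: "tile \<Rightarrow> glue" where "east t = snd t"

definition is_assembly :: "assembly \<Rightarrow> bool" where
  "is_assembly \<alpha> \<longleftrightarrow> dom \<alpha> \<noteq> {} \<and>
     (\<forall>x y z. x \<in> dom \<alpha> \<and> z \<in> dom \<alpha> \<and> x \<le> y \<and> y \<le> z \<longrightarrow> y \<in> dom \<alpha>)"

definition cut_strength :: "assembly \<Rightarrow> int \<Rightarrow> nat" where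
  "cut_strength \<alpha> i =
     (case (\<alpha> i, \<alpha> (i + 1)) of
        (Some s, Some t) \<Rightarrow> (if east s = west t then snd (east s) else 0)
      | _ \<Rightarrow> 0)"

definition tau_stable :: "nat \<Rightarrow> assembly \<Rightarrow> bool" where
  "tau_stable \<tau> \<alpha> \<longleftrightarrow>
     (\<forall>i. i \<in> dom \<alpha> \<and> i + 1 \<in> dom \<alpha> \<longrightarrow> cut_strength \<alpha> i \<ge> \<tau>)"

definition valid_system :: "system \<Rightarrow> bool" where
  "valid_system S \<longleftrightarrow> (case S of (T, \<sigma>, \<tau>) \<Rightarrow>
     finite T \<and> is_assembly \<sigma> \<and> finite (dom \<sigma>) \<and> ran \<sigma> \<subseteq> T \<and> tau_stable \<tau> \<sigma>)"

(* Linear aTAM condition: there is a path in Z from p to a point q outside the minimal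
   bounding interval of dom alpha, avoiding dom alpha; in Z such a path must cover
   the segment between p and q *)
definition linear_ok :: "assembly \<Rightarrow> int \<Rightarrow> bool" where
  "linear_ok \<alpha> p \<longleftrightarrow>
     (\<exists>q. \<not> (\<exists>a\<in>dom \<alpha>. \<exists>b\<in>dom \<alpha>. a \<le> q \<and> q \<le> b) \<and>
          (\<forall>r. min p q \<le> r \<and> r \<le> max p q \<longrightarrow> r \<notin> dom \<alpha>))"

definition lin_step :: "tile set \<Rightarrow> nat \<Rightarrow> assembly \<Rightarrow> assembly \<Rightarrow> bool" where
  "lin_step T \<tau> \<alpha> \<beta> \<longleftrightarrow>
     (\<exists>p t. \<alpha> p = None \<and> t \<in> T \<and> linear_ok \<alpha> p \<and>
            \<beta> = \<alpha>(p \<mapsto> t) \<and> is_assembly \<beta> \<and> tau_stable \<tau> \<beta>)"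

definition is_limit :: "(nat \<Rightarrow> assembly) \<Rightarrow> assembly \<Rightarrow> bool" where
  "is_limit f \<beta> \<longleftrightarrow>
     (\<forall>x. (\<beta> x = None \<longleftrightarrow> (\<forall>n. f n x = None)) \<and>
          (\<forall>n t. f n x = Some t \<longrightarrow> \<beta> x = Some t))"

(* alpha produces beta: finite or infinite sequence of single tile additions
   (finite sequences are represented by stuttering), result = limit *)
definition produces :: "tile set \<Rightarrow> nat \<Rightarrow> assembly \<Rightarrow> assembly \<Rightarrow> bool" where
  "produces T \<tau> \<alpha> \<beta> \<longleftrightarrow>
     (\<exists>f. f 0 = \<alpha> \<and> (\<forall>n. f (Suc n) = f n \<or> lin_step T \<tau> (f n) (f (Suc n))) \<and> is_limit f \<beta>)"

definition producible :: "system \<Rightarrow> assembly set" where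
  "producible S = (case S of (T, \<sigma>, \<tau>) \<Rightarrow> {\<beta>. produces T \<tau> \<sigma> \<beta>})"

definition terminal :: "system \<Rightarrow> assembly set" where
  "terminal S = (case S of (T, \<sigma>, \<tau>) \<Rightarrow>
     {\<alpha> \<in> producible S. \<not> (\<exists>\<beta>. lin_step T \<tau> \<alpha> \<beta>)})"

definition produces_in :: "system \<Rightarrow> assembly \<Rightarrow> assembly \<Rightarrow> bool" where
  "produces_in S \<alpha> \<beta> = (case S of (T, \<sigma>, \<tau>) \<Rightarrow> produces T \<tau> \<alpha> \<beta>)"

(* an m-block is modelled as a function nat => tile option vanishing outside {0..<m} *)
type_synonym block = "nat \<Rightarrow> tile option"

definition is_block :: "nat \<Rightarrow> tile set \<Rightarrow> block \<Rightarrow> bool" where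
  "is_block m U b \<longleftrightarrow> (\<forall>i. m \<le> i \<longrightarrow> b i = None) \<and> ran b \<subseteq> U"

definition block_at :: "nat \<Rightarrow> assembly \<Rightarrow> int \<Rightarrow> block" where
  "block_at m \<alpha> x = (\<lambda>i. if i < m then \<alpha> (int m * x + int i) else None)"

definition valid_repr :: "nat \<Rightarrow> tile set \<Rightarrow> (block \<Rightarrow> tile option) \<Rightarrow> bool" where
  "valid_repr m U R \<longleftrightarrow>
     (\<forall>a b. is_block m U a \<and> is_block m U b \<and> a \<subseteq>\<^sub>m b \<and> R a \<noteq> None \<longrightarrow> R b = R a)"

definition Rstar :: "nat \<Rightarrow> (block \<Rightarrow> tile option) \<Rightarrow> assembly \<Rightarrow> assembly" where
  "Rstar m R \<alpha> = (\<lambda>x. R (block_at m \<alpha> x))"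

definition maps_cleanly :: "nat \<Rightarrow> (block \<Rightarrow> tile option) \<Rightarrow> assembly \<Rightarrow> bool" where
  "maps_cleanly m R \<alpha> \<longleftrightarrow>
     (\<forall>x. block_at m \<alpha> x \<noteq> Map.empty \<longrightarrow>
          (\<exists>y\<in>{x - 1, x, x + 1}. y \<in> dom (Rstar m R \<alpha>)))
     \<or> (\<forall>x y. block_at m \<alpha> x \<noteq> Map.empty \<and> block_at m \<alpha> y \<noteq> Map.empty \<longrightarrow> x = y)"

definition simulates :: "system \<Rightarrow> nat \<Rightarrow> (block \<Rightarrow> tile option) \<Rightarrow> system \<Rightarrow> bool" where
  "simulates Ssys m R Tsys \<longleftrightarrow>
     valid_repr m (fst Ssys) R \<and>
     \<comment> \<open>(i)\<close>
     Rstar m R ` producible Ssys = producible Tsys \<and>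
     Rstar m R ` terminal Ssys = terminal Tsys \<and>
     (\<forall>\<alpha>' \<in> producible Ssys. maps_cleanly m R \<alpha>') \<and>
     \<comment> \<open>(ii)\<close>
     (\<forall>\<alpha>' \<beta>'. \<alpha>' \<in> producible Ssys \<and> produces_in Ssys \<alpha>' \<beta>' \<longrightarrow>
        produces_in Tsys (Rstar m R \<alpha>') (Rstar m R \<beta>')) \<and>
     \<comment> \<open>(iii)\<close>
     (\<forall>\<alpha> \<in> producible Tsys. \<exists>\<Pi> \<subseteq> producible Ssys.
        (\<forall>\<alpha>' \<in> \<Pi>. Rstar m R \<alpha>' = \<alpha>) \<and>
        (\<forall>\<beta>. \<beta> \<in> producible Tsys \<and> produces_in Tsys \<alpha> \<beta> \<longrightarrow>
           (\<forall>\<alpha>' \<in> \<Pi>. \<exists>\<beta>'. produces_in Ssys \<alpha>' \<beta>' \<and> Rstar m R \<beta>' = \<beta>) \<and>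
           (\<forall>\<alpha>'' \<beta>'. \<alpha>'' \<in> producible Ssys \<and> produces_in Ssys \<alpha>'' \<beta>' \<and>
                Rstar m R \<alpha>'' = \<alpha> \<and> Rstar m R \<beta>' = \<beta> \<longrightarrow>
                (\<exists>\<alpha>' \<in> \<Pi>. produces_in Ssys \<alpha>' \<alpha>''))))"

datatype recf = Zero | Succ | Proj nat | Comp recf "recf list" | PrimRec recf recf | Mu recf

inductive eval :: "recf \<Rightarrow> nat list \<Rightarrow> nat \<Rightarrow> bool" where
  eval_zero: "eval Zero xs 0"
| eval_succ: "eval Succ (x # xs) (Suc x)"
| eval_proj: "i < length xs \<Longrightarrow> eval (Proj i) xs (xs ! i)"
| eval_comp: "list_all2 (\<lambda>g y. eval g xs y) gs ys \<Longrightarrow> eval f ys z \<Longrightarrow> eval (Comp f gs) xs z"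
| eval_pr0: "eval f xs z \<Longrightarrow> eval (PrimRec f g) (0 # xs) z"
| eval_prS: "eval (PrimRec f g) (n # xs) y \<Longrightarrow> eval g (n # y # xs) z \<Longrightarrow>
             eval (PrimRec f g) (Suc n # xs) z"
| eval_mu: "eval f (n # xs) 0 \<Longrightarrow> (\<forall>k<n. \<exists>v. 0 < v \<and> eval f (k # xs) v) \<Longrightarrow>
            eval (Mu f) xs n"

definition enc_str :: "string \<Rightarrow> nat" where
  "enc_str s = list_encode (map of_char s)"
definition enc_glue :: "glue \<Rightarrow> nat" where
  "enc_glue g = prod_encode (enc_str (fst g), snd g)"
definition enc_tile :: "tile \<Rightarrow> nat" where
  "enc_tile t = prod_encode (enc_glue (fst t), enc_glue (snd t))"
definition enc_opt :: "tile option \<Rightarrow> nat" where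
  "enc_opt ot = (case ot of None \<Rightarrow> 0 | Some t \<Rightarrow> Suc (enc_tile t))"

definition code_tileset :: "nat \<Rightarrow> tile set \<Rightarrow> bool" where
  "code_tileset n T \<longleftrightarrow> (\<exists>xs. set xs = T \<and> n = list_encode (map enc_tile xs))"

definition code_asm :: "nat \<Rightarrow> assembly \<Rightarrow> bool" where
  "code_asm n \<alpha> \<longleftrightarrow> (\<exists>ps. set ps = {(x, t). \<alpha> x = Some t} \<and>
     n = list_encode (map (\<lambda>(x, t). prod_encode (int_encode x, enc_tile t)) ps))"

definition code_sys :: "nat \<Rightarrow> system \<Rightarrow> bool" where
  "code_sys n S \<longleftrightarrow> (case S of (T, \<sigma>, \<tau>) \<Rightarrow>
     (\<exists>a b. code_tileset a T \<and> code_asm b \<sigma> \<and> n = list_encode [a, b, \<tau>]))"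

definition code_block :: "nat \<Rightarrow> block \<Rightarrow> bool" where
  "code_block n b \<longleftrightarrow> (\<exists>xs. n = list_encode (map enc_opt xs) \<and>
     (\<forall>i. b i = (if i < length xs then xs ! i else None)))"

definition computable_S :: "(system \<Rightarrow> assembly) \<Rightarrow> bool" where
  "computable_S S \<longleftrightarrow> (\<exists>p. \<forall>T n. valid_system T \<and> code_sys n T \<longrightarrow>
     (\<exists>k. eval p [n] k \<and> code_asm k (S T)))"

definition computable_R :: "(system \<Rightarrow> block \<Rightarrow> tile option) \<Rightarrow> bool" where
  "computable_R R \<longleftrightarrow> (\<exists>p. \<forall>T n b c. valid_system T \<and> code_sys n T \<and> code_block c b \<longrightarrow>
     eval p [n, c] (enc_opt (R T b)))"

end

theory Submission
  imports Defs
begin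

text \<open>Let n = card U + 2 and take the counter system with tiles 0, ..., n in which tile k binds
  only tile k + 1 on its east; its producible assemblies are the segments [0..k] with k \<le> n. Clean
  mapping confines every producible assembly of a simulator at scale m to within one block of the
  represented domain [0..n], and confines the seed, which represents the single tile at 0, to
  positions below 2m. The simulator must also produce an assembly representing all of [0..n], which
  therefore covers more than card U consecutive positions to the right of the seed. Two of them
  carry the same tile type, and repeating the stretch between them forever yields a producible
  assembly that is unbounded to the right, a contradiction.\<close>

lemma cut_strength_cong:
  assumes "\<alpha> i = \<beta> k" "\<alpha> (i + 1) = \<beta> (k + 1)"
  shows "cut_strength \<alpha> i = cut_strength \<beta> k"
  using assms by (simp add: cut_strength_def)

lemma tau_stableD:
  "tau_stable \<tau> \<alpha> \<Longrightarrow> i \<in> dom \<alpha> \<Longrightarrow> i + 1 \<in> dom \<alpha> \<Longrightarrow> \<tau> \<le> cut_strength \<alpha> i"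
  unfolding tau_stable_def by blast

lemma tau_stable_glues_match:
  assumes "0 < \<tau>" "tau_stable \<tau> \<alpha>" "\<alpha> x = Some s" "\<alpha> (x + 1) = Some t"
  shows "east s = west t"
proof (rule ccontr)
  assume "east s \<noteq> west t"
  then have "cut_strength \<alpha> x = 0" using assms(3,4) by (simp add: cut_strength_def)
  moreover have "\<tau> \<le> cut_strength \<alpha> x" using tau_stableD[OF assms(2)] assms(3,4) by blast
  ultimately show False using assms(1) by simp
qed

lemma is_assemblyD:
  "is_assembly \<alpha> \<Longrightarrow> x \<in> dom \<alpha> \<Longrightarrow> z \<in> dom \<alpha> \<Longrightarrow> x \<le> y \<Longrightarrow> y \<le> z \<Longrightarrow> y \<in> dom \<alpha>"
  unfolding is_assembly_def by blast

lemma finite_assembly_dom_interval: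
  assumes "is_assembly \<sigma>" "finite (dom \<sigma>)"
  obtains a b where "a \<le> b" "dom \<sigma> = {a..b}"
proof
  have ne: "dom \<sigma> \<noteq> {}" using assms(1) unfolding is_assembly_def by blast
  show "Min (dom \<sigma>) \<le> Max (dom \<sigma>)" using Min_le[OF assms(2) Max_in[OF assms(2) ne]] .
  show "dom \<sigma> = {Min (dom \<sigma>)..Max (dom \<sigma>)}"
  proof
    show "dom \<sigma> \<subseteq> {Min (dom \<sigma>)..Max (dom \<sigma>)}"
    proof
      fix x assume x: "x \<in> dom \<sigma>"
      show "x \<in> {Min (dom \<sigma>)..Max (dom \<sigma>)}" using Min_le[OF assms(2) x] Max_ge[OF assms(2) x] by simp
    qed
    show "{Min (dom \<sigma>)..Max (dom \<sigma>)} \<subseteq> dom \<sigma>"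
      using is_assemblyD[OF assms(1) Min_in[OF assms(2) ne] Max_in[OF assms(2) ne]] by fastforce
  qed
qed

lemma is_assembly_restrict_interval:
  assumes "is_assembly \<beta>" "a \<in> dom \<beta>" "a \<in> {l..h}"
  shows "is_assembly (\<beta> |` {l..h})"
  unfolding is_assembly_def
proof (intro conjI allI impI)
  show "dom (\<beta> |` {l..h}) \<noteq> {}" using assms(2,3) by auto
next
  fix x y z
  assume "x \<in> dom (\<beta> |` {l..h}) \<and> z \<in> dom (\<beta> |` {l..h}) \<and> x \<le> y \<and> y \<le> z"
  then show "y \<in> dom (\<beta> |` {l..h})" using is_assemblyD[OF assms(1), of x z y] by auto
qed

lemma tau_stable_restrict: "tau_stable \<tau> \<beta> \<Longrightarrow> tau_stable \<tau> (\<beta> |` A)"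
  unfolding tau_stable_def
proof (intro allI impI)
  fix i assume "\<forall>i. i \<in> dom \<beta> \<and> i + 1 \<in> dom \<beta> \<longrightarrow> \<tau> \<le> cut_strength \<beta> i"
    and i: "i \<in> dom (\<beta> |` A) \<and> i + 1 \<in> dom (\<beta> |` A)"
  moreover have "cut_strength (\<beta> |` A) i = cut_strength \<beta> i"
    using i by (intro cut_strength_cong) auto
  ultimately show "\<tau> \<le> cut_strength (\<beta> |` A) i" by auto
qed

lemma produces_refl: "produces T \<tau> \<alpha> \<alpha>"
  unfolding produces_def is_limit_def by (rule exI[of _ "\<lambda>_. \<alpha>"]) auto

lemma mem_producible: "\<beta> \<in> producible (T, \<sigma>, \<tau>) \<longleftrightarrow> produces T \<tau> \<sigma> \<beta>"
  by (simp add: producible_def)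

lemma lin_stepD:
  assumes "lin_step T \<tau> \<alpha> \<beta>" "ran \<alpha> \<subseteq> T"
  shows "\<alpha> \<subseteq>\<^sub>m \<beta>" "ran \<beta> \<subseteq> T" "is_assembly \<beta>" "tau_stable \<tau> \<beta>"
proof -
  obtain p t where "\<alpha> p = None" "t \<in> T" "\<beta> = \<alpha>(p \<mapsto> t)" "is_assembly \<beta>" "tau_stable \<tau> \<beta>"
    using assms(1) unfolding lin_step_def by blast
  then show "\<alpha> \<subseteq>\<^sub>m \<beta>" "ran \<beta> \<subseteq> T" "is_assembly \<beta>" "tau_stable \<tau> \<beta>"
    using assms(2) ran_map_upd[of \<alpha> p t] by (auto simp: map_le_def)
qed

lemma is_limit_map_le:
  assumes "is_limit f \<beta>"
  shows "f n \<subseteq>\<^sub>m \<beta>"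
  unfolding map_le_def
proof
  fix x assume "x \<in> dom (f n)"
  then obtain t where t: "f n x = Some t" by blast
  then have "\<beta> x = Some t" using assms unfolding is_limit_def by blast
  with t show "f n x = \<beta> x" by simp
qed

lemma is_limit_SomeD:
  assumes "is_limit f \<beta>" "\<beta> x = Some t"
  shows "\<exists>n. f n x = Some t"
proof -
  have "\<beta> x = None \<longleftrightarrow> (\<forall>n. f n x = None)" using assms(1) unfolding is_limit_def by blast
  then obtain n where "f n x \<noteq> None" using assms(2) by (metis option.distinct(1))
  then obtain t' where "f n x = Some t'" by blast
  moreover have "\<beta> x = Some t'" using assms(1) calculation unfolding is_limit_def by blast
  ultimately show ?thesis using assms(2) by auto
qed

lemma is_limit_dom_pair:
  assumes "\<And>n. f n \<subseteq>\<^sub>m f (Suc n)" "is_limit f \<beta>" "x \<in> dom \<beta>" "z \<in> dom \<beta>"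
  shows "\<exists>N. x \<in> dom (f N) \<and> z \<in> dom (f N)"
proof -
  have "dom (f k) \<subseteq> dom (f (Suc k))" for k using assms(1) map_le_implies_dom_le by blast
  note mono = lift_Suc_mono_le[of "\<lambda>k. dom (f k)", OF this]
  obtain k k' where "x \<in> dom (f k)" "z \<in> dom (f k')"
    using is_limit_SomeD[OF assms(2)] assms(3,4) by blast
  then have "x \<in> dom (f (max k k'))" "z \<in> dom (f (max k k'))"
    using mono[of k "max k k'"] mono[of k' "max k k'"] by auto
  then show ?thesis by blast
qed

lemma growth_sequence_invariant:
  assumes f0: "f 0 = \<sigma>" and steps: "\<And>n. f (Suc n) = f n \<or> lin_step T \<tau> (f n) (f (Suc n))"
    and seed: "is_assembly \<sigma>" "ran \<sigma> \<subseteq> T" "tau_stable \<tau> \<sigma>"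
  shows "is_assembly (f n) \<and> ran (f n) \<subseteq> T \<and> tau_stable \<tau> (f n)" and "f n \<subseteq>\<^sub>m f (Suc n)"
proof -
  show inv: "is_assembly (f n) \<and> ran (f n) \<subseteq> T \<and> tau_stable \<tau> (f n)" for n
  proof (induction n)
    case 0
    then show ?case using seed f0 by simp
  next
    case (Suc n)
    from steps[of n] show ?case
    proof
      assume "lin_step T \<tau> (f n) (f (Suc n))"
      then show ?case using Suc lin_stepD(2-4)[of T \<tau> "f n" "f (Suc n)"] by blast
    next
      assume "f (Suc n) = f n"
      then show ?case using Suc by simp
    qed
  qed
  show "f n \<subseteq>\<^sub>m f (Suc n)"
  proof (cases "f (Suc n) = f n")
    case False
    then show ?thesis using steps[of n] inv[of n] lin_stepD(1) by blast
  qed simp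
qed

lemma produces_invariant:
  assumes "produces T \<tau> \<sigma> \<beta>" and seed: "is_assembly \<sigma>" "ran \<sigma> \<subseteq> T" "tau_stable \<tau> \<sigma>"
  shows "is_assembly \<beta>" "ran \<beta> \<subseteq> T" "tau_stable \<tau> \<beta>" "\<sigma> \<subseteq>\<^sub>m \<beta>"
proof -
  obtain f where f0: "f 0 = \<sigma>"
    and steps: "\<And>n. f (Suc n) = f n \<or> lin_step T \<tau> (f n) (f (Suc n))" and lim: "is_limit f \<beta>"
    using assms(1) unfolding produces_def by blast
  note inv = growth_sequence_invariant(1)[OF f0 steps seed]
  note pair = is_limit_dom_pair[OF growth_sequence_invariant(2)[OF f0 steps seed] lim]
  note below = is_limit_map_le[OF lim]
  have seed_le: "\<sigma> \<subseteq>\<^sub>m \<beta>" using below[of 0] f0 by simp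
  then show "\<sigma> \<subseteq>\<^sub>m \<beta>" .
  show "ran \<beta> \<subseteq> T"
  proof
    fix t assume "t \<in> ran \<beta>"
    then obtain x where "\<beta> x = Some t" unfolding ran_def by blast
    then obtain n where "f n x = Some t" using is_limit_SomeD[OF lim] by blast
    then show "t \<in> T" using inv[of n] ranI by fast
  qed
  show "is_assembly \<beta>"
    unfolding is_assembly_def
  proof (intro conjI allI impI)
    show "dom \<beta> \<noteq> {}"
      using map_le_implies_dom_le[OF seed_le] seed(1) unfolding is_assembly_def by blast
    fix x y z assume xyz: "x \<in> dom \<beta> \<and> z \<in> dom \<beta> \<and> x \<le> y \<and> y \<le> z"
    then obtain N where "x \<in> dom (f N)" "z \<in> dom (f N)" using pair by blast
    then have "y \<in> dom (f N)" using inv[of N] xyz is_assemblyD by blast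
    then show "y \<in> dom \<beta>" using below[of N] map_le_implies_dom_le by blast
  qed
  show "tau_stable \<tau> \<beta>"
    unfolding tau_stable_def
  proof (intro allI impI)
    fix i assume "i \<in> dom \<beta> \<and> i + 1 \<in> dom \<beta>"
    then obtain N where N: "i \<in> dom (f N)" "i + 1 \<in> dom (f N)" using pair by blast
    have "f N i = \<beta> i" "f N (i + 1) = \<beta> (i + 1)" using N below[of N] unfolding map_le_def by blast+
    then have "cut_strength (f N) i = cut_strength \<beta> i" by (rule cut_strength_cong)
    then show "\<tau> \<le> cut_strength \<beta> i" using tau_stableD[of \<tau> "f N" i] inv[of N] N by simp
  qed
qed

lemma restrict_interval_step:
  assumes \<beta>: "is_assembly \<beta>" "ran \<beta> \<subseteq> T" "tau_stable \<tau> \<beta>"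
    and a: "a \<in> dom \<beta>" "a \<in> {l..h}"
    and p: "p \<notin> {l..h}" and grow: "{l'..h'} = insert p {l..h}"
  shows "\<beta> |` {l'..h'} = \<beta> |` {l..h} \<or> lin_step T \<tau> (\<beta> |` {l..h}) (\<beta> |` {l'..h'})"
proof (cases "\<beta> p")
  case None
  then have "(\<beta> |` {l..h}) p = \<beta> p" using p by simp
  then have "(\<beta> |` {l..h})(p := \<beta> p) = \<beta> |` {l..h}" by (rule fun_upd_idem)
  then show ?thesis unfolding grow restrict_map_insert by simp
next
  case (Some t)
  have "(\<beta> |` {l..h}) p = None" using p by simp
  moreover have "t \<in> T" using Some \<beta>(2) ranI by fast
  moreover have "linear_ok (\<beta> |` {l..h}) p"
    unfolding linear_ok_def using p by (intro exI[of _ p]) auto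
  moreover have "\<beta> |` {l'..h'} = (\<beta> |` {l..h})(p \<mapsto> t)"
    using Some by (simp add: grow restrict_map_insert)
  moreover have "a \<in> {l'..h'}" using a(2) grow by blast
  then have "is_assembly (\<beta> |` {l'..h'})" by (rule is_assembly_restrict_interval[OF \<beta>(1) a(1)])
  ultimately show ?thesis
    unfolding lin_step_def using tau_stable_restrict[OF \<beta>(3)] by blast
qed

lemma restrict_dom_map_le: "\<sigma> \<subseteq>\<^sub>m \<beta> \<Longrightarrow> \<beta> |` dom \<sigma> = \<sigma>"
proof
  fix x assume le: "\<sigma> \<subseteq>\<^sub>m \<beta>"
  show "(\<beta> |` dom \<sigma>) x = \<sigma> x"
  proof (cases "x \<in> dom \<sigma>")
    case True
    then have "\<sigma> x = \<beta> x" using le unfolding map_le_def by blast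
    then show ?thesis using True by (simp only: restrict_in)
  next
    case False
    then show ?thesis by (metis domIff restrict_out)
  qed
qed

lemma is_limit_restrict:
  assumes "\<And>x. \<exists>n. x \<in> A n"
  shows "is_limit (\<lambda>n. \<beta> |` A n) \<beta>"
  unfolding is_limit_def
proof
  fix x
  obtain N where "x \<in> A N" using assms by blast
  then have "(\<beta> |` A N) x = \<beta> x" by simp
  moreover have "(\<beta> |` A n) x = \<beta> x \<or> (\<beta> |` A n) x = None" for n by (simp add: restrict_map_def)
  ultimately show "(\<beta> x = None) = (\<forall>n. (\<beta> |` A n) x = None) \<and>
      (\<forall>n t. (\<beta> |` A n) x = Some t \<longrightarrow> \<beta> x = Some t)"
    by (metis option.distinct(1))
qed

lemma produces_extension:
  assumes \<beta>: "is_assembly \<beta>" "ran \<beta> \<subseteq> T" "tau_stable \<tau> \<beta>"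
    and seed: "\<sigma> \<subseteq>\<^sub>m \<beta>" "dom \<sigma> = {a..b}" "a \<le> b"
  shows "produces T \<tau> \<sigma> \<beta>"
proof -
  \<comment> \<open>grow alternately to the left and to the right, one position at a time\<close>
  define lo where "lo n = a - int ((n + 1) div 2)" for n :: nat
  define hi where "hi n = b + int (n div 2)" for n :: nat
  define f where "f n = \<beta> |` {lo n..hi n}" for n
  have "a \<in> dom \<sigma>" using seed(2,3) by simp
  then have a_dom: "a \<in> dom \<beta>" using map_le_implies_dom_le[OF seed(1)] by blast
  have a_in: "a \<in> {lo n..hi n}" for n using seed(3) unfolding lo_def hi_def by auto
  have f0: "f 0 = \<sigma>"
    using restrict_dom_map_le[OF seed(1)] seed(2) by (simp add: f_def lo_def hi_def)
  have steps: "f (Suc n) = f n \<or> lin_step T \<tau> (f n) (f (Suc n))" for n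
  proof -
    define p where "p = (if even n then lo n - 1 else hi n + 1)"
    have "lo (Suc n) = lo n - 1 \<and> hi (Suc n) = hi n" if "even n"
      using that unfolding lo_def hi_def by (auto elim!: evenE)
    moreover have "lo (Suc n) = lo n \<and> hi (Suc n) = hi n + 1" if "odd n"
      using that unfolding lo_def hi_def by (auto elim!: oddE)
    ultimately have grow: "{lo (Suc n)..hi (Suc n)} = insert p {lo n..hi n}"
      using a_in[of n] unfolding p_def by (cases "even n") auto
    have new: "p \<notin> {lo n..hi n}" unfolding p_def by auto
    show ?thesis unfolding f_def using restrict_interval_step[OF \<beta> a_dom a_in new grow] .
  qed
  have "\<exists>N. x \<in> {lo N..hi N}" for x
  proof
    define N where "N = nat (\<bar>x - a\<bar> + \<bar>x - b\<bar>)"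
    have "(2 * N + 1) div 2 = N" by simp
    then show "x \<in> {lo (2 * N)..hi (2 * N)}" unfolding lo_def hi_def N_def by auto
  qed
  then have "is_limit f \<beta>" unfolding f_def by (rule is_limit_restrict)
  then show ?thesis unfolding produces_def using f0 steps by blast
qed

section \<open>Pumping\<close>

definition pump_pos :: "int \<Rightarrow> int \<Rightarrow> int \<Rightarrow> int" where
  "pump_pos i j x = (if x < i then x else i + (x - i) mod (j - i))"

definition pump :: "assembly \<Rightarrow> int \<Rightarrow> int \<Rightarrow> assembly" where
  "pump \<beta> i j = \<beta> \<circ> pump_pos i j"

lemma pump_pos_bounds:
  assumes "i < j" "i \<le> x"
  shows "pump_pos i j x \<in> {i..<j}"
proof -
  have "0 \<le> (x - i) mod (j - i)" "(x - i) mod (j - i) < j - i" using assms(1) by simp_all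
  then show ?thesis using assms(2) by (simp add: pump_pos_def)
qed

lemma pump_below: "x < i \<Longrightarrow> pump \<beta> i j x = \<beta> x"
  by (simp add: pump_def pump_pos_def)

lemma pump_agrees:
  assumes "i < j" "\<beta> i = \<beta> j" "x \<le> j"
  shows "pump \<beta> i j x = \<beta> x"
proof (cases "x < i")
  case True
  then show ?thesis by (rule pump_below)
next
  case False
  show ?thesis
  proof (cases "x = j")
    case True
    then show ?thesis using assms(1,2) by (simp add: pump_def pump_pos_def)
  next
    case False
    then have "(x - i) mod (j - i) = x - i" using \<open>\<not> x < i\<close> assms(3) by (intro mod_pos_pos_trivial) auto
    then show ?thesis using \<open>\<not> x < i\<close> by (simp add: pump_def pump_pos_def)
  qed
qed

lemma pump_Suc:
  assumes "i < j" "\<beta> i = \<beta> j"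
  shows "pump \<beta> i j (y + 1) = \<beta> (pump_pos i j y + 1)"
proof (cases "y < i")
  case True
  then show ?thesis using pump_agrees[OF assms, of "y + 1"] assms(1) by (simp add: pump_pos_def)
next
  case False
  define r where "r = (y - i) mod (j - i)"
  have r: "0 \<le> r" "r < j - i" using assms(1) by (simp_all add: r_def)
  have "(y + 1 - i) mod (j - i) = (r + 1) mod (j - i)"
    unfolding r_def by (simp add: mod_add_left_eq diff_add_eq)
  then have pump: "pump \<beta> i j (y + 1) = \<beta> (i + (r + 1) mod (j - i))"
    using False by (simp add: pump_def pump_pos_def)
  have pos: "pump_pos i j y = i + r" using False by (simp add: pump_pos_def r_def)
  show ?thesis
  proof (cases "r + 1 < j - i")
    case True
    then show ?thesis using pump pos r by (simp add: add.assoc)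
  next
    case False
    then have "r + 1 = j - i" using r by simp
    then have "(r + 1) mod (j - i) = 0" "i + r + 1 = j" by simp_all
    then show ?thesis using pump pos assms(2) by simp
  qed
qed

lemma cut_strength_pump:
  assumes "i < j" "\<beta> i = \<beta> j"
  shows "cut_strength (pump \<beta> i j) y = cut_strength \<beta> (pump_pos i j y)"
  using pump_Suc[OF assms] by (intro cut_strength_cong) (simp_all add: pump_def)

lemma mem_dom_pump:
  assumes "i < j" "{i..j} \<subseteq> dom \<beta>"
  shows "x \<in> dom (pump \<beta> i j) \<longleftrightarrow> i \<le> x \<or> x \<in> dom \<beta>"
proof (cases "x < i")
  case True
  then show ?thesis using pump_below[OF True, of \<beta> j] by (simp add: domIff)
next
  case False
  then have "pump_pos i j x \<in> {i..j}" using pump_pos_bounds[OF assms(1), of x] by simp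
  then have "pump_pos i j x \<in> dom \<beta>" using assms(2) by blast
  then have "x \<in> dom (pump \<beta> i j)" by (metis comp_apply domIff pump_def)
  then show ?thesis using False by simp
qed

lemma is_assembly_pump:
  assumes "is_assembly \<beta>" "i < j" "{i..j} \<subseteq> dom \<beta>"
  shows "is_assembly (pump \<beta> i j)"
  unfolding is_assembly_def
proof (intro conjI allI impI)
  note mem = mem_dom_pump[OF assms(2,3)]
  show "dom (pump \<beta> i j) \<noteq> {}" using mem[of i] by blast
  fix x y z
  assume xyz: "x \<in> dom (pump \<beta> i j) \<and> z \<in> dom (pump \<beta> i j) \<and> x \<le> y \<and> y \<le> z"
  show "y \<in> dom (pump \<beta> i j)"
  proof (cases "i \<le> y")
    case False
    have "i \<in> {i..j}" using assms(2) by simp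
    then have "i \<in> dom \<beta>" using assms(3) by blast
    have "min z i \<in> dom \<beta>"
    proof (cases "i \<le> z")
      case True
      then show ?thesis using \<open>i \<in> dom \<beta>\<close> by (simp add: min_absorb2)
    next
      case False
      then have "z \<in> dom \<beta>" using xyz mem[of z] by blast
      then show ?thesis using False by (simp add: min_absorb1)
    qed
    moreover have "\<not> i \<le> x" using xyz False by linarith
    then have "x \<in> dom \<beta>" using xyz mem[of x] by blast
    moreover have "x \<le> y" "y \<le> min z i" using xyz False by simp_all
    ultimately have "y \<in> dom \<beta>" using is_assemblyD[OF assms(1)] by blast
    then show ?thesis using mem by blast
  qed (use mem in blast)
qed

lemma tau_stable_pump:
  assumes "tau_stable \<tau> \<beta>" "i < j" "\<beta> i = \<beta> j"
  shows "tau_stable \<tau> (pump \<beta> i j)"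
  unfolding tau_stable_def
proof (intro allI impI)
  fix y assume y: "y \<in> dom (pump \<beta> i j) \<and> y + 1 \<in> dom (pump \<beta> i j)"
  then have "pump \<beta> i j y \<noteq> None" "pump \<beta> i j (y + 1) \<noteq> None" unfolding domIff by blast+
  moreover have "pump \<beta> i j y = \<beta> (pump_pos i j y)" by (simp add: pump_def)
  ultimately have "\<beta> (pump_pos i j y) \<noteq> None" "\<beta> (pump_pos i j y + 1) \<noteq> None"
    using pump_Suc[OF assms(2,3), of y] by metis+
  then have "pump_pos i j y \<in> dom \<beta>" "pump_pos i j y + 1 \<in> dom \<beta>" unfolding domIff .
  then show "\<tau> \<le> cut_strength (pump \<beta> i j) y"
    using tau_stableD[OF assms(1)] cut_strength_pump[OF assms(2,3)] by simp
qed

lemma ran_pump: "ran (pump \<beta> i j) \<subseteq> ran \<beta>"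
  unfolding pump_def ran_def comp_def by blast

lemma produces_pump:
  assumes prod: "produces T \<tau> \<sigma> \<beta>"
    and seed: "is_assembly \<sigma>" "finite (dom \<sigma>)" "ran \<sigma> \<subseteq> T" "tau_stable \<tau> \<sigma>"
    and ij: "i < j" "{i..j} \<subseteq> dom \<beta>" "\<beta> i = \<beta> j" and left: "dom \<sigma> \<subseteq> {..j}"
  shows "produces T \<tau> \<sigma> (pump \<beta> i j)"
proof -
  note \<beta> = produces_invariant[OF prod seed(1,3,4)]
  obtain a b where ab: "a \<le> b" "dom \<sigma> = {a..b}" using finite_assembly_dom_interval[OF seed(1,2)] .
  have "\<sigma> \<subseteq>\<^sub>m pump \<beta> i j"
    unfolding map_le_def
  proof
    fix x assume x: "x \<in> dom \<sigma>"
    then have "pump \<beta> i j x = \<beta> x" using pump_agrees[OF ij(1,3)] left by blast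
    then show "\<sigma> x = pump \<beta> i j x" using \<beta>(4) x unfolding map_le_def by simp
  qed
  moreover have "ran (pump \<beta> i j) \<subseteq> T" using ran_pump \<beta>(2) by blast
  ultimately show ?thesis
    using produces_extension[OF is_assembly_pump[OF \<beta>(1) ij(1,2)] _ tau_stable_pump[OF \<beta>(3) ij(1,3)]]
      ab by blast
qed

lemma assembly_repeats_tile:
  assumes "finite U" "ran \<beta> \<subseteq> U" "{l..l + int (card U)} \<subseteq> dom \<beta>"
  obtains i j where "l \<le> i" "i < j" "j \<le> l + int (card U)" "\<beta> i = \<beta> j"
proof -
  let ?I = "{l..l + int (card U)}"
  have tiles: "\<beta> ` ?I \<subseteq> Some ` U"
  proof
    fix t assume "t \<in> \<beta> ` ?I"
    then obtain x where "x \<in> dom \<beta>" "t = \<beta> x" using assms(3) by blast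
    then obtain u where "t = Some u" "u \<in> ran \<beta>" by (metis domD ranI)
    then show "t \<in> Some ` U" using assms(2) by blast
  qed
  have "\<not> inj_on \<beta> ?I"
  proof
    assume "inj_on \<beta> ?I"
    then have "card ?I \<le> card (Some ` U)"
      using card_inj_on_le[OF _ tiles] assms(1) by blast
    then show False by (simp add: card_image)
  qed
  then obtain x y where "x \<in> ?I" "y \<in> ?I" "x \<noteq> y" "\<beta> x = \<beta> y" unfolding inj_on_def by blast
  then show ?thesis using that by (metis atLeastAtMost_iff linorder_neq_iff)
qed

lemma producible_unbounded_if_long:
  assumes valid: "valid_system (U, \<sigma>, \<tau>)" and \<beta>: "\<beta> \<in> producible (U, \<sigma>, \<tau>)"
    and left: "dom \<sigma> \<subseteq> {..l}" and long: "{l..l + int (card U)} \<subseteq> dom \<beta>"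
  shows "\<exists>\<gamma> \<in> producible (U, \<sigma>, \<tau>). {l + int (card U)..} \<subseteq> dom \<gamma>"
proof -
  have seed: "finite U" "is_assembly \<sigma>" "finite (dom \<sigma>)" "ran \<sigma> \<subseteq> U" "tau_stable \<tau> \<sigma>"
    using valid by (simp_all add: valid_system_def)
  have prod: "produces U \<tau> \<sigma> \<beta>" using \<beta> by (simp add: mem_producible)
  obtain i j where ij: "l \<le> i" "i < j" "j \<le> l + int (card U)" "\<beta> i = \<beta> j"
    using assembly_repeats_tile[OF seed(1) produces_invariant(2)[OF prod seed(2,4,5)] long] .
  have "{i..j} \<subseteq> {l..l + int (card U)}" using ij by auto
  then have sub: "{i..j} \<subseteq> dom \<beta>" using long by blast
  have "{..l} \<subseteq> {..j}" using ij(1,2) by simp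
  then have "produces U \<tau> \<sigma> (pump \<beta> i j)"
    using produces_pump[OF prod seed(2-5) ij(2) sub ij(4) subset_trans[OF left]] by blast
  then have "pump \<beta> i j \<in> producible (U, \<sigma>, \<tau>)" by (simp only: mem_producible)
  moreover have "{l + int (card U)..} \<subseteq> dom (pump \<beta> i j)"
  proof
    fix x assume "x \<in> {l + int (card U)..}"
    then have "i \<le> x" using ij(1,2,3) by simp
    then show "x \<in> dom (pump \<beta> i j)" using mem_dom_pump[OF ij(2) sub] by blast
  qed
  ultimately show ?thesis by blast
qed

lemma block_at_is_block: "ran \<alpha> \<subseteq> U \<Longrightarrow> is_block m U (block_at m \<alpha> x)"
  unfolding is_block_def block_at_def ran_def by auto

lemma Rstar_mono:
  assumes "valid_repr m U R" "\<alpha> \<subseteq>\<^sub>m \<beta>" "ran \<beta> \<subseteq> U"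
  shows "Rstar m R \<alpha> \<subseteq>\<^sub>m Rstar m R \<beta>"
proof -
  have "ran \<alpha> \<subseteq> U" using assms(2,3) unfolding map_le_def ran_def by force
  moreover have "block_at m \<alpha> x \<subseteq>\<^sub>m block_at m \<beta> x" for x
    using assms(2) unfolding map_le_def block_at_def by (auto split: if_splits)
  ultimately show ?thesis
    using assms(1) block_at_is_block[of _ U m] assms(3)
    unfolding map_le_def Rstar_def valid_repr_def by (metis domIff)
qed

lemma Rstar_empty_block_None:
  assumes "valid_repr m U R" "ran \<alpha> \<subseteq> U" "x \<notin> dom (Rstar m R \<alpha>)"
  shows "R Map.empty = None"
proof (rule ccontr)
  assume empty: "R Map.empty \<noteq> None"
  have "is_block m U Map.empty" by (simp add: is_block_def)
  then have "R (block_at m \<alpha> x) = R Map.empty"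
    using assms(1) block_at_is_block[OF assms(2)] empty map_le_empty unfolding valid_repr_def by blast
  then show False using assms(3) empty unfolding Rstar_def domIff by metis
qed

lemma block_at_nonempty_iff:
  "block_at m \<alpha> x \<noteq> Map.empty \<longleftrightarrow> (\<exists>i<m. int m * x + int i \<in> dom \<alpha>)"
proof
  assume "block_at m \<alpha> x \<noteq> Map.empty"
  then obtain i where "block_at m \<alpha> x i \<noteq> None" by (meson ext)
  then show "\<exists>i<m. int m * x + int i \<in> dom \<alpha>"
    unfolding block_at_def domIff by (metis (full_types))
next
  assume "\<exists>i<m. int m * x + int i \<in> dom \<alpha>"
  then obtain i where "i < m" "\<alpha> (int m * x + int i) \<noteq> None" unfolding domIff by blast
  then have "block_at m \<alpha> x i \<noteq> None" by (simp add: block_at_def)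
  then show "block_at m \<alpha> x \<noteq> Map.empty" by metis
qed

lemma block_at_div_nonempty:
  assumes "0 < m" "p \<in> dom \<alpha>"
  shows "block_at m \<alpha> (p div int m) \<noteq> Map.empty"
proof -
  have "nat (p mod int m) < m" using assms(1) by (simp add: nat_less_iff)
  moreover have "int m * (p div int m) + int (nat (p mod int m)) = p"
    using assms(1) by (simp add: mult.commute)
  ultimately show ?thesis using assms(2) block_at_nonempty_iff by metis
qed

lemma maps_cleanly_dom_bound:
  assumes m: "0 < m" and clean: "maps_cleanly m R \<alpha>" and empty: "R Map.empty = None"
    and x: "x \<in> dom (Rstar m R \<alpha>)" and bound: "dom (Rstar m R \<alpha>) \<subseteq> {..b}" and p: "p \<in> dom \<alpha>"
  shows "p < int m * (b + 2)"
proof -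
  have block_x: "block_at m \<alpha> x \<noteq> Map.empty" using x empty unfolding Rstar_def domIff by metis
  note block_p = block_at_div_nonempty[OF m p]
  have "p div int m \<le> b + 1"
  proof (cases "\<forall>x. block_at m \<alpha> x \<noteq> Map.empty \<longrightarrow> (\<exists>y\<in>{x - 1, x, x + 1}. y \<in> dom (Rstar m R \<alpha>))")
    case True
    then obtain y where y: "y \<in> {p div int m - 1, p div int m, p div int m + 1}" "y \<in> dom (Rstar m R \<alpha>)"
      using block_p by blast
    then have "y \<le> b" using bound atMost_iff by blast
    then show ?thesis using y(1) by auto
  next
    case False
    then have "p div int m = x" using clean block_x block_p unfolding maps_cleanly_def by blast
    moreover have "x \<le> b" using x bound atMost_iff by blast
    ultimately show ?thesis by simp
  qed
  then have "int m * (p div int m + 1) \<le> int m * (b + 2)" by (intro mult_left_mono) auto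
  moreover have "p < int m * (p div int m) + int m"
  proof -
    have "p mod int m < int m" using m by simp
    moreover have "p = int m * (p div int m) + p mod int m" by simp
    ultimately show ?thesis by linarith
  qed
  ultimately show ?thesis by (simp add: distrib_left)
qed

section \<open>Counter systems\<close>

definition counter_tile :: "nat \<Rightarrow> nat \<Rightarrow> tile" where
  "counter_tile n k =
     ((replicate k CHR ''a'', if k = 0 then 0 else 1), (replicate (Suc k) CHR ''a'', if k = n then 0 else 1))"

definition counter_system :: "nat \<Rightarrow> system" where
  "counter_system n = (counter_tile n ` {0..n}, [0 \<mapsto> counter_tile n 0], 1)"

definition counter_chain :: "nat \<Rightarrow> assembly" where
  "counter_chain n x = (if 0 \<le> x \<and> x \<le> int n then Some (counter_tile n (nat x)) else None)"

lemma counter_tile_glues_match: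
  "east (counter_tile n k) = west (counter_tile n l) \<longleftrightarrow> l = Suc k \<and> k \<noteq> n"
  by (auto simp: east_def west_def counter_tile_def simp del: replicate_Suc)

lemma counter_system_valid: "valid_system (counter_system n)"
  unfolding valid_system_def counter_system_def is_assembly_def tau_stable_def by (auto simp: ran_def)

lemma counter_seed_producible: "[0 \<mapsto> counter_tile n 0] \<in> producible (counter_system n)"
  by (simp add: counter_system_def mem_producible produces_refl)

lemma counter_producibleD:
  assumes "\<beta> \<in> producible (counter_system n)"
  shows "is_assembly \<beta>" "ran \<beta> \<subseteq> counter_tile n ` {0..n}" "tau_stable 1 \<beta>"
    and "\<beta> 0 = Some (counter_tile n 0)"
proof -
  let ?seed = "[0 \<mapsto> counter_tile n 0]"
  have prod: "produces (counter_tile n ` {0..n}) 1 ?seed \<beta>"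
    using assms by (simp add: counter_system_def mem_producible)
  have seed: "is_assembly ?seed" "ran ?seed \<subseteq> counter_tile n ` {0..n}" "tau_stable 1 ?seed"
    using counter_system_valid[of n] by (simp_all add: valid_system_def counter_system_def)
  note inv = produces_invariant[OF prod seed]
  show "is_assembly \<beta>" "ran \<beta> \<subseteq> counter_tile n ` {0..n}" "tau_stable 1 \<beta>" by (fact inv)+
  have "0 \<in> dom ?seed" by simp
  then show "\<beta> 0 = Some (counter_tile n 0)" using inv(4) unfolding map_le_def by (metis fun_upd_same)
qed

lemma counter_producible_tile:
  assumes "\<beta> \<in> producible (counter_system n)" "\<beta> x = Some t"
  shows "\<exists>k. t = counter_tile n k"
proof -
  have "t \<in> ran \<beta>" using assms(2) by (rule ranI)
  then show ?thesis using counter_producibleD(2)[OF assms(1)] by blast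
qed

lemma counter_producible_next:
  assumes "\<beta> \<in> producible (counter_system n)"
    and "\<beta> x = Some (counter_tile n k)" "\<beta> (x + 1) = Some t"
  shows "t = counter_tile n (Suc k) \<and> k \<noteq> n"
proof -
  obtain l where l: "t = counter_tile n l" using counter_producible_tile[OF assms(1,3)] by blast
  have "east (counter_tile n k) = west t"
    using tau_stable_glues_match[OF _ counter_producibleD(3)[OF assms(1)] assms(2,3)] by simp
  then show ?thesis using l by (simp add: counter_tile_glues_match)
qed

lemma counter_producible_dom:
  assumes \<beta>: "\<beta> \<in> producible (counter_system n)"
  shows "dom \<beta> \<subseteq> {0..int n}"
proof -
  note asm = counter_producibleD(1)[OF \<beta>] and zero = counter_producibleD(4)[OF \<beta>]
  have zero_dom: "0 \<in> dom \<beta>" using zero by (rule domI)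
  have "-1 \<notin> dom \<beta>"
  proof
    assume "-1 \<in> dom \<beta>"
    then obtain s where s: "\<beta> (-1) = Some s" by blast
    then obtain k where "s = counter_tile n k" using counter_producible_tile[OF \<beta>] by blast
    then have "counter_tile n 0 = counter_tile n (Suc k)"
      using counter_producible_next[OF \<beta>, of "-1" k] s zero by simp
    then show False by (simp add: counter_tile_def)
  qed
  then have nonneg: "0 \<le> x" if "x \<in> dom \<beta>" for x
  proof (rule contrapos_np)
    assume "\<not> 0 \<le> x"
    then show "-1 \<in> dom \<beta>" using is_assemblyD[OF asm that zero_dom] by simp
  qed
  have right: "\<beta> (int k) = Some (counter_tile n k) \<and> k \<le> n" if "int k \<in> dom \<beta>" for k
    using that
  proof (induction k)
    case 0
    then show ?case using zero by simp
  next
    case (Suc k)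
    have "int k \<in> dom \<beta>" using is_assemblyD[OF asm zero_dom Suc.prems] by simp
    then have IH: "\<beta> (int k) = Some (counter_tile n k)" "k \<le> n" using Suc.IH by blast+
    obtain t where t: "\<beta> (int k + 1) = Some t" using Suc.prems by (metis domD of_nat_Suc add.commute)
    then show ?case using counter_producible_next[OF \<beta> IH(1) t] IH(2) by (simp add: add.commute)
  qed
  show ?thesis
  proof
    fix x assume x: "x \<in> dom \<beta>"
    then have "nat x \<le> n" using right[of "nat x"] nonneg[OF x] by simp
    then show "x \<in> {0..int n}" using nonneg[OF x] by simp
  qed
qed

lemma counter_chain_producible: "counter_chain n \<in> producible (counter_system n)"
proof -
  have dom_chain: "dom (counter_chain n) = {0..int n}"
    by (auto simp: counter_chain_def domIff split: if_splits)
  have "produces (counter_tile n ` {0..n}) 1 [0 \<mapsto> counter_tile n 0] (counter_chain n)"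
  proof (rule produces_extension[where a = 0 and b = 0])
    show "is_assembly (counter_chain n)" unfolding is_assembly_def dom_chain by auto
    show "[0 \<mapsto> counter_tile n 0] \<subseteq>\<^sub>m counter_chain n" by (simp add: map_le_def counter_chain_def)
    show "ran (counter_chain n) \<subseteq> counter_tile n ` {0..n}"
    proof
      fix t assume "t \<in> ran (counter_chain n)"
      then obtain x where x: "counter_chain n x = Some t" unfolding ran_def by blast
      then have "0 \<le> x" "x \<le> int n" "t = counter_tile n (nat x)"
        by (simp_all add: counter_chain_def split: if_splits)
      then show "t \<in> counter_tile n ` {0..n}" by (intro image_eqI[of _ _ "nat x"]) auto
    qed
    show "tau_stable 1 (counter_chain n)"
      unfolding tau_stable_def dom_chain
    proof (intro allI impI)
      fix i assume "i \<in> {0..int n} \<and> i + 1 \<in> {0..int n}"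
      then have i: "0 \<le> i" "i + 1 \<le> int n" by simp_all
      then have "counter_chain n i = Some (counter_tile n (nat i))"
        "counter_chain n (i + 1) = Some (counter_tile n (Suc (nat i)))"
        by (simp_all add: counter_chain_def nat_add_distrib)
      then show "1 \<le> cut_strength (counter_chain n) i"
        using i by (simp add: cut_strength_def counter_tile_glues_match) (simp add: east_def counter_tile_def)
    qed
  qed simp_all
  then show ?thesis by (simp add: counter_system_def mem_producible)
qed

section \<open>Simulating a counter system\<close>

locale counter_simulation =
  fixes U :: "tile set" and \<sigma> :: assembly and \<tau> :: nat
    and m :: nat and R :: "block \<Rightarrow> tile option" and n :: nat
  assumes valid: "valid_system (U, \<sigma>, \<tau>)"
    and scale: "0 < m"
    and sim: "simulates (U, \<sigma>, \<tau>) m R (counter_system n)"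
begin

lemma seed: "is_assembly \<sigma>" "ran \<sigma> \<subseteq> U" "tau_stable \<tau> \<sigma>"
  using valid by (simp_all add: valid_system_def)

lemma producibleD:
  assumes "\<alpha> \<in> producible (U, \<sigma>, \<tau>)"
  shows "is_assembly \<alpha>" "ran \<alpha> \<subseteq> U" "\<sigma> \<subseteq>\<^sub>m \<alpha>"
proof -
  have "produces U \<tau> \<sigma> \<alpha>" using assms by (simp only: mem_producible)
  note inv = produces_invariant[OF this seed]
  show "is_assembly \<alpha>" "ran \<alpha> \<subseteq> U" "\<sigma> \<subseteq>\<^sub>m \<alpha>" by (fact inv)+
qed

lemma seed_producible: "\<sigma> \<in> producible (U, \<sigma>, \<tau>)"
  by (simp add: mem_producible produces_refl)

lemma repr_valid: "valid_repr m U R"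
  and represents: "Rstar m R ` producible (U, \<sigma>, \<tau>) = producible (counter_system n)"
  and producible_maps_cleanly: "\<alpha> \<in> producible (U, \<sigma>, \<tau>) \<Longrightarrow> maps_cleanly m R \<alpha>"
  using sim unfolding simulates_def by auto

lemma represented_dom:
  assumes "\<alpha> \<in> producible (U, \<sigma>, \<tau>)"
  shows "dom (Rstar m R \<alpha>) \<subseteq> {0..int n}" "0 \<in> dom (Rstar m R \<alpha>)"
proof -
  have rep: "Rstar m R \<alpha> \<in> producible (counter_system n)" using assms represents by blast
  show "dom (Rstar m R \<alpha>) \<subseteq> {0..int n}" by (rule counter_producible_dom[OF rep])
  show "0 \<in> dom (Rstar m R \<alpha>)" using counter_producibleD(4)[OF rep] by (rule domI)
qed

lemma empty_block_None: "R Map.empty = None"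
proof -
  have "int n + 1 \<notin> {0..int n}" by simp
  then have "int n + 1 \<notin> dom (Rstar m R \<sigma>)" using represented_dom(1)[OF seed_producible] by blast
  then show ?thesis using Rstar_empty_block_None[OF repr_valid seed(2)] by blast
qed

lemma producible_bounded:
  assumes "\<alpha> \<in> producible (U, \<sigma>, \<tau>)"
  shows "dom \<alpha> \<subseteq> {..< int m * (int n + 2)}"
proof
  fix p assume "p \<in> dom \<alpha>"
  moreover have "dom (Rstar m R \<alpha>) \<subseteq> {..int n}"
    using represented_dom(1)[OF assms] atLeastAtMost_iff by blast
  ultimately show "p \<in> {..< int m * (int n + 2)}"
    using maps_cleanly_dom_bound[OF scale producible_maps_cleanly[OF assms] empty_block_None
        represented_dom(2)[OF assms]] by blast
qed

lemma seed_bounded: "dom \<sigma> \<subseteq> {..< 2 * int m}"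
proof
  fix p assume p: "p \<in> dom \<sigma>"
  have "[0 \<mapsto> counter_tile n 0] \<in> Rstar m R ` producible (U, \<sigma>, \<tau>)"
    unfolding represents by (rule counter_seed_producible)
  then obtain \<alpha> where \<alpha>: "[0 \<mapsto> counter_tile n 0] = Rstar m R \<alpha>" "\<alpha> \<in> producible (U, \<sigma>, \<tau>)"
    by (rule imageE)
  have "Rstar m R \<sigma> \<subseteq>\<^sub>m Rstar m R \<alpha>"
    using Rstar_mono[OF repr_valid producibleD(3,2)[OF \<alpha>(2)]] .
  then have "dom (Rstar m R \<sigma>) \<subseteq> dom (Rstar m R \<alpha>)" by (rule map_le_implies_dom_le)
  also have "\<dots> \<subseteq> {..0}" unfolding \<alpha>(1)[symmetric] by simp
  finally have "dom (Rstar m R \<sigma>) \<subseteq> {..0}" .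
  then have "p < int m * (0 + 2)"
    by (rule maps_cleanly_dom_bound[OF scale producible_maps_cleanly[OF seed_producible] empty_block_None
        represented_dom(2)[OF seed_producible] _ p])
  then show "p \<in> {..< 2 * int m}" by simp
qed

lemma long_producible: "\<exists>\<beta> \<in> producible (U, \<sigma>, \<tau>). {2 * int m..int m * int n} \<subseteq> dom \<beta>"
proof -
  have "counter_chain n \<in> Rstar m R ` producible (U, \<sigma>, \<tau>)"
    unfolding represents by (rule counter_chain_producible)
  then obtain \<beta> where \<beta>: "counter_chain n = Rstar m R \<beta>" "\<beta> \<in> producible (U, \<sigma>, \<tau>)"
    by (rule imageE)
  have "counter_chain n (int n) = Some (counter_tile n n)" by (simp add: counter_chain_def)
  then have "int n \<in> dom (Rstar m R \<beta>)" unfolding \<beta>(1)[symmetric] by (rule domI)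
  then have "block_at m \<beta> (int n) \<noteq> Map.empty"
    using empty_block_None unfolding Rstar_def domIff by metis
  then obtain i where i: "int m * int n + int i \<in> dom \<beta>" using block_at_nonempty_iff by blast
  obtain s where "s \<in> dom \<sigma>" using seed(1) unfolding is_assembly_def by blast
  then have s: "s \<in> dom \<beta>" "s < 2 * int m"
    using producibleD(3)[OF \<beta>(2)] map_le_implies_dom_le seed_bounded by blast+
  have "{2 * int m..int m * int n} \<subseteq> dom \<beta>"
  proof
    fix y assume "y \<in> {2 * int m..int m * int n}"
    then have "s \<le> y" "y \<le> int m * int n + int i" using s(2) by simp_all
    then show "y \<in> dom \<beta>" using is_assemblyD[OF producibleD(1)[OF \<beta>(2)] s(1) i] by blast
  qed
  then show ?thesis using \<beta>(2) by blast
qed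

theorem counter_length_bound: "n < card U + 2"
proof (rule ccontr)
  let ?K = "int (card U)"
  assume "\<not> n < card U + 2"
  then have "int m * (?K + 2) \<le> int m * int n" by (intro mult_left_mono) auto
  moreover have "1 * ?K \<le> int m * ?K" using scale by (intro mult_right_mono) auto
  ultimately have "2 * int m + ?K \<le> int m * int n" by (simp add: distrib_left)
  moreover obtain \<beta> where \<beta>: "\<beta> \<in> producible (U, \<sigma>, \<tau>)" "{2 * int m..int m * int n} \<subseteq> dom \<beta>"
    using long_producible by blast
  ultimately have "{2 * int m..2 * int m + ?K} \<subseteq> {2 * int m..int m * int n}" by simp
  then have long: "{2 * int m..2 * int m + ?K} \<subseteq> dom \<beta>" using \<beta>(2) by (rule subset_trans)
  have "{..< 2 * int m} \<subseteq> {..2 * int m}" by auto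
  then have "dom \<sigma> \<subseteq> {..2 * int m}" using seed_bounded by blast
  then obtain \<gamma> where \<gamma>: "\<gamma> \<in> producible (U, \<sigma>, \<tau>)" "{2 * int m + ?K..} \<subseteq> dom \<gamma>"
    using producible_unbounded_if_long[OF valid \<beta>(1) _ long] by blast
  define x where "x = max (2 * int m + ?K) (int m * (int n + 2))"
  have "x \<in> {2 * int m + ?K..}" by (simp add: x_def)
  then have "x \<in> dom \<gamma>" using \<gamma>(2) by blast
  then have "x \<in> {..< int m * (int n + 2)}" using producible_bounded[OF \<gamma>(1)] by blast
  then show False by (simp add: x_def)
qed

end

theorem mainTheorem8:
  shows "\<not> (\<exists>(U :: tile set) (\<tau>' :: nat) (R :: system \<Rightarrow> block \<Rightarrow> tile option)
              (S :: system \<Rightarrow> assembly).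
            finite U \<and> computable_R R \<and> computable_S S \<and>
            (\<forall>T. valid_system T \<longrightarrow>
                 valid_system (U, S T, \<tau>') \<and>
                 (\<exists>m > 0. simulates (U, S T, \<tau>') m (R T) T)))"
proof
  assume "\<exists>(U :: tile set) (\<tau>' :: nat) (R :: system \<Rightarrow> block \<Rightarrow> tile option)
              (S :: system \<Rightarrow> assembly).
            finite U \<and> computable_R R \<and> computable_S S \<and>
            (\<forall>T. valid_system T \<longrightarrow>
                 valid_system (U, S T, \<tau>') \<and>
                 (\<exists>m > 0. simulates (U, S T, \<tau>') m (R T) T))"
  then obtain U \<tau>' R S where
    simulator: "\<forall>T. valid_system T \<longrightarrow> valid_system (U, S T, \<tau>') \<and> (\<exists>m > 0. simulates (U, S T, \<tau>') m (R T) T)"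
    by blast
  let ?T = "counter_system (card U + 2)"
  obtain m where "valid_system (U, S ?T, \<tau>')" "0 < m" "simulates (U, S ?T, \<tau>') m (R ?T) ?T"
    using simulator counter_system_valid by blast
  then interpret counter_simulation U "S ?T" \<tau>' m "R ?T" "card U + 2"
    by unfold_locales
  show False using counter_length_bound by simp
qed

end
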